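(* Let $d\in\mathbb N$. Then: (1) for each $j=1,\dots,d$ and each bounded linear operator $T:C_0(\mathbb R)\to C_0(\mathbb R)$ there is a unique bounded linear operator $\mathcal T^j:C_0(\mathbb R^d)\to C_0(\mathbb R^d)$ such that for every $f\in C_0(\mathbb R^d)$ and every $x\in\mathbb R^d$, $$(\mathcal T^jf)(x_1,\dots,x_d)=\bigl(T(f(x_1,\dots,x_{j-1},\cdot,x_{j+1},\dots,x_d))\bigr)(x_j);$$ (2) for each $j$, the map $V_j:T\mapsto\mathcal T^j$ is a continuous homomorphism of the Banach algebra $\mathcal B(C_0(\mathbb R),C_0(\mathbb R))$ into the Banach algebra $\mathcal B(C_0(\mathbb R^d),C_0(\mathbb R^d))$; (3) for all $S,T\in\mathcal B(C_0(\mathbb R),C_0(\mathbb R))$ and all $i\ne j$, $V_i(S)V_j(T)f=V_j(T)V_i(S)f$ for every $f\in C_0(\mathbb R^d)$.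
   Context: $C_0(\mathbb R^d)$ is the Banach space of continuous real functions on $\mathbb R^d$ tending to $0$ at infinity, with the sup norm; $\mathcal B(X,X)$ is the Banach algebra of bounded linear operators on $X$ with the operator norm. *)

theory Defs
  imports "HOL-Analysis.Analysis"
begin

definition C0 :: "('a::real_normed_vector \<Rightarrow> real) set" where
  "C0 = {f. continuous_on UNIV f \<and> (f \<longlongrightarrow> 0) at_infinity}"

definition supn :: "('a \<Rightarrow> real) \<Rightarrow> real" where
  "supn f = (SUP x. \<bar>f x\<bar>)"

text \<open>Bounded linear operators C_0(X) to C_0(X), as maps on functions
  (only their values on C_0(X) are relevant).\<close>
definition bounded_op :: "(('a::real_normed_vector \<Rightarrow> real) \<Rightarrow> ('a \<Rightarrow> real)) \<Rightarrow> bool" where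
  "bounded_op T \<longleftrightarrow>
     (\<forall>f\<in>C0. T f \<in> C0) \<and>
     (\<forall>f\<in>C0. \<forall>g\<in>C0. \<forall>a b::real.
         T (\<lambda>x. a * f x + b * g x) = (\<lambda>x. a * T f x + b * T g x)) \<and>
     (\<exists>K. \<forall>f\<in>C0. supn (T f) \<le> K * supn f)"

definition opnorm :: "(('a::real_normed_vector \<Rightarrow> real) \<Rightarrow> ('a \<Rightarrow> real)) \<Rightarrow> real" where
  "opnorm T = (SUP f\<in>{f\<in>C0. supn f \<le> 1}. supn (T f))"

definition op_lincomb :: "real \<Rightarrow> (('a \<Rightarrow> real) \<Rightarrow> ('a \<Rightarrow> real)) \<Rightarrow> real
    \<Rightarrow> (('a \<Rightarrow> real) \<Rightarrow> ('a \<Rightarrow> real)) \<Rightarrow> (('a \<Rightarrow> real) \<Rightarrow> ('a \<Rightarrow> real))" where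
  "op_lincomb a S b T = (\<lambda>f x. a * S f x + b * T f x)"

definition coord_upd :: "real^'n \<Rightarrow> 'n \<Rightarrow> real \<Rightarrow> real^'n" where
  "coord_upd x j t = (\<chi> i. if i = j then t else x $ i)"

definition coord_lift :: "'n \<Rightarrow> ((real \<Rightarrow> real) \<Rightarrow> (real \<Rightarrow> real))
    \<Rightarrow> ((real^'n \<Rightarrow> real) \<Rightarrow> (real^'n \<Rightarrow> real))" where
  "coord_lift j T = (\<lambda>f x. T (\<lambda>t. f (coord_upd x j t)) (x $ j))"

end

theory Submission
  imports Defs
begin

text \<open>Write f^x_j for the slice t \<mapsto> f(x with x_j := t). The lifted operator maps
  x \<mapsto> g(x with x_j := c) h(x_j) to x \<mapsto> g(x with x_j := c) (T h)(x_j), again a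
  C_0 function, and finite sums of such products are uniformly dense in C_0(R^d):
  interpolate f piecewise linearly in x_j along the grid Z/N. Since
  |(V_j T f)(x)| \<le> ||T|| ||f^x_j|| \<le> ||T|| ||f||, the function V_j T f is a uniform limit of
  C_0 functions, hence in C_0, and ||V_j T|| \<le> ||T|| yields continuity of V_j. For i \<noteq> j,
  V_i S and V_j T commute on such products taken in the i-th coordinate, hence
  everywhere by density.\<close>

section \<open>Functions vanishing at infinity\<close>

lemma tendsto_zero_at_infinity_iff:
  fixes f :: "'a::real_normed_vector \<Rightarrow> real"
  shows "(f \<longlongrightarrow> 0) at_infinity \<longleftrightarrow> (\<forall>e>0. \<exists>R. \<forall>x. R \<le> norm x \<longrightarrow> \<bar>f x\<bar> \<le> e)"
proof
  assume "(f \<longlongrightarrow> 0) at_infinity"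
  then show "\<forall>e>0. \<exists>R. \<forall>x. R \<le> norm x \<longrightarrow> \<bar>f x\<bar> \<le> e"
    unfolding Lim_at_infinity dist_real_def by (metis diff_zero less_imp_le)
next
  assume R: "\<forall>e>0. \<exists>R. \<forall>x. R \<le> norm x \<longrightarrow> \<bar>f x\<bar> \<le> e"
  show "(f \<longlongrightarrow> 0) at_infinity"
    unfolding Lim_at_infinity dist_real_def
  proof (intro allI impI)
    fix e :: real assume "e > 0"
    with R obtain R where "\<forall>x. R \<le> norm x \<longrightarrow> \<bar>f x\<bar> \<le> e / 2"
      using half_gt_zero by blast
    with \<open>e > 0\<close> show "\<exists>b. \<forall>x. b \<le> norm x \<longrightarrow> \<bar>f x - 0\<bar> < e"
      by fastforce
  qed
qed

lemma C0_vanishes: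
  fixes f :: "'a::real_normed_vector \<Rightarrow> real"
  assumes "f \<in> C0" "e > 0"
  obtains R where "\<And>x. R \<le> norm x \<Longrightarrow> \<bar>f x\<bar> \<le> e"
  using assms unfolding C0_def tendsto_zero_at_infinity_iff by blast

lemma C0_bounded:
  fixes f :: "'a::{real_normed_vector,heine_borel} \<Rightarrow> real"
  assumes "f \<in> C0"
  obtains B where "\<And>x. \<bar>f x\<bar> \<le> B"
proof -
  obtain R where R: "\<And>x. R \<le> norm x \<Longrightarrow> \<bar>f x\<bar> \<le> 1"
    using C0_vanishes[OF assms zero_less_one] by blast
  have "compact (f ` cball 0 R)"
    using assms by (intro compact_continuous_image) (auto simp: C0_def intro: continuous_on_subset)
  then obtain B where B: "\<And>x. x \<in> cball 0 R \<Longrightarrow> \<bar>f x\<bar> \<le> B"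
    by (metis compact_imp_bounded bounded_iff image_eqI real_norm_def)
  have "\<bar>f x\<bar> \<le> max B 1" for x
    using B[of x] R[of x] by (cases "norm x \<le> R") auto
  then show thesis by (rule that)
qed

lemma abs_le_supn:
  fixes f :: "'a::{real_normed_vector,heine_borel} \<Rightarrow> real"
  assumes "f \<in> C0"
  shows "\<bar>f x\<bar> \<le> supn f"
proof -
  obtain B where "\<And>x. \<bar>f x\<bar> \<le> B" using C0_bounded[OF assms] by blast
  then have "bdd_above (range (\<lambda>x. \<bar>f x\<bar>))" by (intro bdd_aboveI2)
  then show ?thesis unfolding supn_def by (rule cSUP_upper[OF UNIV_I])
qed

lemma supn_least: "(\<And>x. \<bar>f x\<bar> \<le> c) \<Longrightarrow> supn f \<le> c"
  unfolding supn_def by (rule cSUP_least) auto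

lemma supn_nonneg:
  fixes f :: "'a::{real_normed_vector,heine_borel} \<Rightarrow> real"
  shows "f \<in> C0 \<Longrightarrow> 0 \<le> supn f"
  using abs_le_supn[of f 0] by linarith

lemma C0_zero: "(\<lambda>x. 0) \<in> C0"
  by (simp add: C0_def)

lemma C0_lincomb: "f \<in> C0 \<Longrightarrow> g \<in> C0 \<Longrightarrow> (\<lambda>x. a * f x + b * g x) \<in> C0"
  unfolding C0_def by (auto intro!: continuous_intros tendsto_add_zero tendsto_mult_right_zero)

lemma C0_diff: "f \<in> C0 \<Longrightarrow> g \<in> C0 \<Longrightarrow> (\<lambda>x. f x - g x) \<in> C0"
  using C0_lincomb[of f g 1 "-1"] by simp

lemma C0_sum: "(\<And>k. k \<in> A \<Longrightarrow> g k \<in> C0) \<Longrightarrow> (\<lambda>x. \<Sum>k\<in>A. g k x) \<in> C0"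
  unfolding C0_def by (auto intro!: continuous_intros tendsto_null_sum)

lemma C0_uniformly_continuous:
  fixes f :: "'a::{real_normed_vector,heine_borel} \<Rightarrow> real"
  assumes f: "f \<in> C0"
  shows "uniformly_continuous_on UNIV f"
  unfolding uniformly_continuous_on_def
proof (intro allI impI)
  fix e :: real assume e: "e > 0"
  obtain R where R: "\<And>x. R \<le> norm x \<Longrightarrow> \<bar>f x\<bar> \<le> e / 3"
    using C0_vanishes[OF f] e by (metis divide_pos_pos zero_less_numeral)
  have "uniformly_continuous_on (cball 0 (R + 1)) f"
    using f by (intro compact_uniformly_continuous) (auto simp: C0_def intro: continuous_on_subset)
  then obtain d where d: "d > 0"
    and close: "\<And>x x'. x \<in> cball 0 (R + 1) \<Longrightarrow> x' \<in> cball 0 (R + 1) \<Longrightarrow>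
                  dist x' x < d \<Longrightarrow> dist (f x') (f x) < e"
    unfolding uniformly_continuous_on_def using e by metis
  show "\<exists>d>0. \<forall>x\<in>UNIV. \<forall>x'\<in>UNIV. dist x' x < d \<longrightarrow> dist (f x') (f x) < e"
  proof (intro exI[of _ "min d 1"] conjI ballI impI)
    fix x x' :: 'a assume xx': "dist x' x < min d 1"
    then have "\<bar>norm x - norm x'\<bar> < 1"
      using norm_triangle_ineq3[of x x'] by (simp add: dist_norm norm_minus_commute)
    then consider "x \<in> cball 0 (R + 1)" "x' \<in> cball 0 (R + 1)" | "R \<le> norm x" "R \<le> norm x'"
      by (force simp: dist_norm)
    then show "dist (f x') (f x) < e"
    proof cases
      case 1 then show ?thesis using close xx' by simp
    next
      case 2 then show ?thesis using R[of x] R[of x'] e by (simp add: dist_real_def)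
    qed
  qed (use d in simp)
qed

lemma C0_uniform_approx:
  fixes f :: "'a::real_normed_vector \<Rightarrow> real"
  assumes approx: "\<And>e. e > 0 \<Longrightarrow> \<exists>g\<in>C0. \<forall>x. \<bar>f x - g x\<bar> \<le> e"
  shows "f \<in> C0"
proof -
  have "continuous_on UNIV f"
    unfolding continuous_on_iff
  proof (intro ballI allI impI)
    fix x :: 'a and e :: real assume e: "e > 0"
    obtain g where g: "g \<in> C0" "\<And>x. \<bar>f x - g x\<bar> \<le> e / 3" using approx[of "e / 3"] e by auto
    then have "continuous_on UNIV g" by (simp add: C0_def)
    then obtain d where d: "d > 0" "\<And>x'. dist x' x < d \<Longrightarrow> dist (g x') (g x) < e / 3"
      unfolding continuous_on_iff using e by (metis UNIV_I divide_pos_pos zero_less_numeral)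
    have "dist (f x') (f x) < e" if "dist x' x < d" for x'
      using d(2)[OF that] g(2)[of x] g(2)[of x'] unfolding dist_real_def by arith
    with d(1) show "\<exists>d>0. \<forall>x'\<in>UNIV. dist x' x < d \<longrightarrow> dist (f x') (f x) < e" by blast
  qed
  moreover have "(f \<longlongrightarrow> 0) at_infinity"
    unfolding tendsto_zero_at_infinity_iff
  proof (intro allI impI)
    fix e :: real assume e: "e > 0"
    obtain g where g: "g \<in> C0" "\<And>x. \<bar>f x - g x\<bar> \<le> e / 2" using approx[of "e / 2"] e by auto
    obtain R where R: "\<And>x. R \<le> norm x \<Longrightarrow> \<bar>g x\<bar> \<le> e / 2"
      using C0_vanishes[OF g(1)] e by (metis half_gt_zero)
    have "\<bar>f x\<bar> \<le> e" if "R \<le> norm x" for x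
      using R[OF that] g(2)[of x] by linarith
    then show "\<exists>R. \<forall>x. R \<le> norm x \<longrightarrow> \<bar>f x\<bar> \<le> e" by blast
  qed
  ultimately show ?thesis by (simp add: C0_def)
qed

section \<open>Bounded operators on C_0\<close>

lemma bounded_op_C0: "bounded_op T \<Longrightarrow> f \<in> C0 \<Longrightarrow> T f \<in> C0"
  by (simp add: bounded_op_def)

lemma bounded_op_lincomb:
  "bounded_op T \<Longrightarrow> f \<in> C0 \<Longrightarrow> g \<in> C0 \<Longrightarrow>
    T (\<lambda>x. a * f x + b * g x) = (\<lambda>x. a * T f x + b * T g x)"
  by (simp add: bounded_op_def)

lemma bounded_op_mult: "bounded_op T \<Longrightarrow> f \<in> C0 \<Longrightarrow> T (\<lambda>x. c * f x) = (\<lambda>x. c * T f x)"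
  using bounded_op_lincomb[of T f f c 0] by simp

lemma bounded_op_diff:
  "bounded_op T \<Longrightarrow> f \<in> C0 \<Longrightarrow> g \<in> C0 \<Longrightarrow> T (\<lambda>x. f x - g x) = (\<lambda>x. T f x - T g x)"
  using bounded_op_lincomb[of T f g 1 "-1"] by simp

lemma bounded_op_sum:
  assumes T: "bounded_op T" and "finite A" and "\<And>k. k \<in> A \<Longrightarrow> g k \<in> C0"
  shows "T (\<lambda>x. \<Sum>k\<in>A. g k x) = (\<lambda>x. \<Sum>k\<in>A. T (g k) x)"
  using assms(2,3)
proof (induction A rule: finite_induct)
  case empty
  then show ?case using bounded_op_mult[OF T C0_zero, of 0] by simp
next
  case (insert a A)
  then have "(\<lambda>x. \<Sum>k\<in>A. g k x) \<in> C0" by (intro C0_sum) auto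
  with insert show ?case using bounded_op_lincomb[OF T, of "g a" _ 1 1] by simp
qed

lemma bounded_op_bound:
  fixes T :: "('a::{real_normed_vector,heine_borel} \<Rightarrow> real) \<Rightarrow> ('a \<Rightarrow> real)"
  assumes T: "bounded_op T"
  obtains K where "K \<ge> 0" "\<And>f x. f \<in> C0 \<Longrightarrow> \<bar>T f x\<bar> \<le> K * supn f"
proof -
  obtain K where K: "\<And>f. f \<in> C0 \<Longrightarrow> supn (T f) \<le> K * supn f"
    using T unfolding bounded_op_def by blast
  have "\<bar>T f x\<bar> \<le> max K 0 * supn f" if f: "f \<in> C0" for f x
  proof -
    have "\<bar>T f x\<bar> \<le> K * supn f"
      using abs_le_supn[OF bounded_op_C0[OF T f], of x] K[OF f] by linarith
    also have "\<dots> \<le> max K 0 * supn f"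
      using supn_nonneg[OF f] by (intro mult_right_mono) auto
    finally show ?thesis .
  qed
  then show thesis by (intro that[of "max K 0"]) auto
qed

lemma bounded_opI:
  fixes T :: "('a::real_normed_vector \<Rightarrow> real) \<Rightarrow> ('a \<Rightarrow> real)"
  assumes "\<And>f. f \<in> C0 \<Longrightarrow> T f \<in> C0"
    and "\<And>f g a b. f \<in> C0 \<Longrightarrow> g \<in> C0 \<Longrightarrow>
           T (\<lambda>x. a * f x + b * g x) = (\<lambda>x. a * T f x + b * T g x)"
    and "\<And>f x. f \<in> C0 \<Longrightarrow> \<bar>T f x\<bar> \<le> K * supn f"
  shows "bounded_op T"
  unfolding bounded_op_def using assms by (blast intro: supn_least)

lemma bounded_op_compose:
  fixes U V :: "('a::{real_normed_vector,heine_borel} \<Rightarrow> real) \<Rightarrow> ('a \<Rightarrow> real)"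
  assumes U: "bounded_op U" and V: "bounded_op V"
  shows "bounded_op (\<lambda>f. U (V f))"
proof -
  obtain KU where KU: "KU \<ge> 0" "\<And>f x. f \<in> C0 \<Longrightarrow> \<bar>U f x\<bar> \<le> KU * supn f"
    using bounded_op_bound[OF U] by blast
  obtain KV where KV: "\<And>f. f \<in> C0 \<Longrightarrow> supn (V f) \<le> KV * supn f"
    using V unfolding bounded_op_def by blast
  have "\<bar>U (V f) x\<bar> \<le> (KU * KV) * supn f" if f: "f \<in> C0" for f x
  proof -
    have "\<bar>U (V f) x\<bar> \<le> KU * supn (V f)" using KU(2) bounded_op_C0[OF V f] .
    also have "\<dots> \<le> KU * (KV * supn f)" using KV[OF f] KU(1) by (rule mult_left_mono)
    finally show ?thesis by (simp add: mult.assoc)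
  qed
  with U V show ?thesis
    by (intro bounded_opI) (auto simp: bounded_op_C0 bounded_op_lincomb)
qed

lemma bounded_op_op_lincomb:
  fixes S T :: "('a::{real_normed_vector,heine_borel} \<Rightarrow> real) \<Rightarrow> ('a \<Rightarrow> real)"
  assumes S: "bounded_op S" and T: "bounded_op T"
  shows "bounded_op (op_lincomb a S b T)"
proof -
  obtain KS where KS: "KS \<ge> 0" "\<And>f x. f \<in> C0 \<Longrightarrow> \<bar>S f x\<bar> \<le> KS * supn f"
    using bounded_op_bound[OF S] by blast
  obtain KT where KT: "KT \<ge> 0" "\<And>f x. f \<in> C0 \<Longrightarrow> \<bar>T f x\<bar> \<le> KT * supn f"
    using bounded_op_bound[OF T] by blast
  have bound: "\<bar>op_lincomb a S b T f x\<bar> \<le> (\<bar>a\<bar> * KS + \<bar>b\<bar> * KT) * supn f"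
    if f: "f \<in> C0" for f x
  proof -
    have "\<bar>a * S f x + b * T f x\<bar> \<le> \<bar>a\<bar> * \<bar>S f x\<bar> + \<bar>b\<bar> * \<bar>T f x\<bar>"
      by (metis abs_mult abs_triangle_ineq)
    also have "\<dots> \<le> \<bar>a\<bar> * (KS * supn f) + \<bar>b\<bar> * (KT * supn f)"
      using KS(2)[OF f] KT(2)[OF f] by (intro add_mono mult_left_mono) auto
    finally show ?thesis by (simp add: op_lincomb_def algebra_simps)
  qed
  show ?thesis
    by (rule bounded_opI[OF _ _ bound])
      (use S T in \<open>auto simp: op_lincomb_def bounded_op_C0 bounded_op_lincomb C0_lincomb algebra_simps\<close>)
qed

lemma bounded_op_eq_by_approx:
  fixes U V :: "('a::{real_normed_vector,heine_borel} \<Rightarrow> real) \<Rightarrow> ('a \<Rightarrow> real)"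
  assumes U: "bounded_op U" and V: "bounded_op V" and f: "f \<in> C0"
    and approx: "\<And>e. e > 0 \<Longrightarrow> \<exists>g\<in>C0. (\<forall>x. \<bar>f x - g x\<bar> \<le> e) \<and> U g = V g"
  shows "U f = V f"
proof
  fix x
  obtain KU where KU: "KU \<ge> 0" "\<And>f x. f \<in> C0 \<Longrightarrow> \<bar>U f x\<bar> \<le> KU * supn f"
    using bounded_op_bound[OF U] by blast
  obtain KV where KV: "KV \<ge> 0" "\<And>f x. f \<in> C0 \<Longrightarrow> \<bar>V f x\<bar> \<le> KV * supn f"
    using bounded_op_bound[OF V] by blast
  have "\<bar>U f x - V f x\<bar> \<le> 0 + e" if e: "e > 0" for e
  proof -
    define K where "K = KU + KV + 1"
    have K: "K > 0" using KU KV by (simp add: K_def)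
    obtain g where g: "g \<in> C0" "\<And>x. \<bar>f x - g x\<bar> \<le> e / K" and Ug: "U g = V g"
      using approx[of "e / K"] e K by auto
    have fg: "(\<lambda>x. f x - g x) \<in> C0" "supn (\<lambda>x. f x - g x) \<le> e / K"
      using C0_diff[OF f g(1)] supn_least[OF g(2)] by auto
    have "U f x - V f x = U (\<lambda>x. f x - g x) x - V (\<lambda>x. f x - g x) x"
      using Ug bounded_op_diff[OF U f g(1)] bounded_op_diff[OF V f g(1)] by simp
    also have "\<bar>\<dots>\<bar> \<le> KU * supn (\<lambda>x. f x - g x) + KV * supn (\<lambda>x. f x - g x)"
      using KU(2)[OF fg(1), of x] KV(2)[OF fg(1), of x] by linarith
    also have "\<dots> = (KU + KV) * supn (\<lambda>x. f x - g x)" by (simp add: distrib_right)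
    also have "\<dots> \<le> (KU + KV) * (e / K)" using fg(2) KU(1) KV(1) by (intro mult_left_mono) auto
    also have "\<dots> \<le> e" using K e by (simp add: K_def field_simps)
    finally show ?thesis by simp
  qed
  then show "U f x = V f x"
    using field_le_epsilon[of "\<bar>U f x - V f x\<bar>" 0] by simp
qed

section \<open>Coordinate slices and tensors\<close>

lemma coord_upd_nth [simp]: "coord_upd x j t $ i = (if i = j then t else x $ i)"
  by (simp add: coord_upd_def)

lemma coord_upd_coord_upd_same [simp]: "coord_upd (coord_upd x j t) j s = coord_upd x j s"
  by (simp add: vec_eq_iff)

lemma coord_upd_nth_same [simp]: "coord_upd x j (x $ j) = x"
  by (simp add: vec_eq_iff)

lemma coord_upd_swap: "i \<noteq> j \<Longrightarrow> coord_upd (coord_upd x j t) i s = coord_upd (coord_upd x i s) j t"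
  by (simp add: vec_eq_iff)

lemma coord_upd_eq_add_axis: "coord_upd x j t = x + (t - x $ j) *\<^sub>R axis j 1"
  by (simp add: vec_eq_iff axis_def)

lemma dist_coord_upd: "dist (coord_upd x j a) (coord_upd x j b) = \<bar>a - b\<bar>"
  by (simp add: coord_upd_eq_add_axis dist_norm algebra_simps flip: scaleR_diff_left)

lemma abs_le_norm_coord_upd: "\<bar>t\<bar> \<le> norm (coord_upd x j t)"
  using component_le_norm_cart[of "coord_upd x j t" j] by simp

lemma norm_le_norm_coord_upd: "norm x \<le> norm (coord_upd x j c) + \<bar>x $ j - c\<bar>"
  using dist_triangle[of x 0 "coord_upd x j c"] dist_coord_upd[of x j "x $ j" c]
  by (simp add: dist_commute dist_norm)

lemma C0_slice:
  fixes f :: "real^'n \<Rightarrow> real"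
  assumes f: "f \<in> C0"
  shows "(\<lambda>t. f (coord_upd x j t)) \<in> C0"
proof -
  have "continuous_on UNIV (\<lambda>t. f (coord_upd x j t))"
    using f unfolding C0_def coord_upd_eq_add_axis
    by (auto intro!: continuous_on_compose2[of UNIV f] continuous_intros)
  moreover have "((\<lambda>t. f (coord_upd x j t)) \<longlongrightarrow> 0) at_infinity"
    unfolding tendsto_zero_at_infinity_iff
  proof (intro allI impI)
    fix e :: real assume "e > 0"
    then obtain R where "\<And>y. R \<le> norm y \<Longrightarrow> \<bar>f y\<bar> \<le> e" using C0_vanishes[OF f] by blast
    then show "\<exists>R. \<forall>t::real. R \<le> norm t \<longrightarrow> \<bar>f (coord_upd x j t)\<bar> \<le> e"
      using abs_le_norm_coord_upd[of _ x j] by (metis order_trans real_norm_def)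
  qed
  ultimately show ?thesis by (simp add: C0_def)
qed

lemma supn_slice_le:
  fixes f :: "real^'n \<Rightarrow> real"
  shows "f \<in> C0 \<Longrightarrow> supn (\<lambda>t. f (coord_upd x j t)) \<le> supn f"
  by (intro supn_least abs_le_supn)

definition coord_tensor :: "'n \<Rightarrow> (real^'n \<Rightarrow> real) \<Rightarrow> real \<Rightarrow> (real \<Rightarrow> real) \<Rightarrow> real^'n \<Rightarrow> real"
  where "coord_tensor j g c h x = g (coord_upd x j c) * h (x $ j)"

lemma C0_coord_tensor:
  fixes g :: "real^'n \<Rightarrow> real"
  assumes g: "g \<in> C0" and h: "h \<in> C0"
  shows "coord_tensor j g c h \<in> C0"
proof -
  have "continuous_on UNIV (coord_tensor j g c h)"
    using g h unfolding C0_def coord_tensor_def coord_upd_eq_add_axis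
    by (auto intro!: continuous_intros continuous_on_compose2[of UNIV g]
        continuous_on_compose2[of UNIV h])
  moreover have "(coord_tensor j g c h \<longlongrightarrow> 0) at_infinity"
    unfolding tendsto_zero_at_infinity_iff
  proof (intro allI impI)
    fix e :: real assume e: "e > 0"
    obtain Bg Bh where "\<And>y. \<bar>g y\<bar> \<le> Bg" "\<And>t. \<bar>h t\<bar> \<le> Bh"
      using C0_bounded[OF g] C0_bounded[OF h] by metis
    then obtain B where B: "B > 0" "\<And>y. \<bar>g y\<bar> \<le> B" "\<And>t. \<bar>h t\<bar> \<le> B"
      by (metis max.cobounded1 max.cobounded2 order_trans zero_less_one less_max_iff_disj)
    obtain Rg where Rg: "\<And>y. Rg \<le> norm y \<Longrightarrow> \<bar>g y\<bar> \<le> e / B"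
      using C0_vanishes[OF g] e B(1) by (metis divide_pos_pos)
    obtain Rh where Rh: "\<And>t. Rh \<le> norm t \<Longrightarrow> \<bar>h t\<bar> \<le> e / B"
      using C0_vanishes[OF h] e B(1) by (metis divide_pos_pos)
    have "\<bar>coord_tensor j g c h x\<bar> \<le> e" if x: "\<bar>Rg\<bar> + \<bar>Rh\<bar> + \<bar>c\<bar> \<le> norm x" for x
    proof (cases "Rh \<le> \<bar>x $ j\<bar>")
      case True
      then have "\<bar>g (coord_upd x j c)\<bar> * \<bar>h (x $ j)\<bar> \<le> B * (e / B)"
        using B Rh[of "x $ j"] by (intro mult_mono) auto
      then show ?thesis using B by (simp add: coord_tensor_def abs_mult)
    next
      case False
      then have "Rg \<le> norm (coord_upd x j c)"
        using x norm_le_norm_coord_upd[of x j c] by linarith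
      then have "\<bar>g (coord_upd x j c)\<bar> * \<bar>h (x $ j)\<bar> \<le> (e / B) * B"
        using B Rg e by (intro mult_mono) auto
      then show ?thesis using B by (simp add: coord_tensor_def abs_mult)
    qed
    then show "\<exists>R. \<forall>x. R \<le> norm x \<longrightarrow> \<bar>coord_tensor j g c h x\<bar> \<le> e" by blast
  qed
  ultimately show ?thesis by (simp add: C0_def)
qed

section \<open>Piecewise linear interpolation in one coordinate\<close>

definition tent :: "real \<Rightarrow> int \<Rightarrow> real \<Rightarrow> real"
  where "tent N k u = max 0 (1 - \<bar>N * u - of_int k\<bar>)"

lemma tent_nonneg: "0 \<le> tent N k u"
  by (simp add: tent_def)

lemma tent_eq_0: "1 \<le> \<bar>N * u - of_int k\<bar> \<Longrightarrow> tent N k u = 0"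
  by (simp add: tent_def)

lemma C0_tent:
  assumes N: "N > 0"
  shows "tent N k \<in> C0"
proof -
  have "tent N k u = 0" if "(\<bar>of_int k\<bar> + 1) / N \<le> norm u" for u
  proof (rule tent_eq_0)
    have "\<bar>of_int k\<bar> + 1 \<le> N * \<bar>u\<bar>" using that N by (simp add: field_simps)
    then show "1 \<le> \<bar>N * u - of_int k\<bar>" using N by (simp add: abs_mult abs_if split: if_splits)
  qed
  then have "(tent N k \<longlongrightarrow> 0) at_infinity"
    unfolding tendsto_zero_at_infinity_iff by (metis abs_zero less_imp_le)
  moreover have "continuous_on UNIV (tent N k)"
    unfolding tent_def by (intro continuous_intros)
  ultimately show ?thesis by (simp add: C0_def)
qed

text \<open>The tents form a partition of unity: at each point only the two tents with
  k = \<lfloor>N u\<rfloor> and k = \<lfloor>N u\<rfloor> + 1 are nonzero, and they add up to 1.\<close>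
lemma sum_tent:
  fixes M :: nat
  shows sum_tent_le_1: "(\<Sum>k\<in>{-int M..int M}. tent N k u) \<le> 1"
    and sum_tent_eq_1: "\<bar>N * u\<bar> \<le> real M - 1 \<Longrightarrow> (\<Sum>k\<in>{-int M..int M}. tent N k u) = 1"
proof -
  define m where "m = \<lfloor>N * u\<rfloor>"
  have m: "of_int m \<le> N * u" "N * u < of_int m + 1" unfolding m_def by linarith+
  have zero: "tent N k u = 0" if "k \<notin> {m, m + 1}" for k
  proof (rule tent_eq_0)
    from that have "k \<le> m - 1 \<or> m + 2 \<le> k" by auto
    then have "of_int k \<le> of_int m - (1::real) \<or> of_int m + (2::real) \<le> of_int k"
      by (metis of_int_1 of_int_add of_int_diff of_int_le_iff of_int_numeral)
    with m show "1 \<le> \<bar>N * u - of_int k\<bar>" by linarith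
  qed
  have pair: "(\<Sum>k\<in>{m, m + 1}. tent N k u) = 1"
    using m by (simp add: tent_def)
  have restrict: "(\<Sum>k\<in>{-int M..int M}. tent N k u) = (\<Sum>k\<in>{-int M..int M} \<inter> {m, m + 1}. tent N k u)"
    by (rule sum.mono_neutral_right) (auto intro: zero)
  have "(\<Sum>k\<in>{-int M..int M} \<inter> {m, m + 1}. tent N k u) \<le> (\<Sum>k\<in>{m, m + 1}. tent N k u)"
    by (rule sum_mono2) (auto simp: tent_nonneg)
  with restrict pair show "(\<Sum>k\<in>{-int M..int M}. tent N k u) \<le> 1" by simp
  assume "\<bar>N * u\<bar> \<le> real M - 1"
  with m have "{-int M..int M} \<inter> {m, m + 1} = {m, m + 1}" by auto
  with restrict pair show "(\<Sum>k\<in>{-int M..int M}. tent N k u) = 1" by simp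
qed

definition coord_interp :: "real \<Rightarrow> nat \<Rightarrow> 'n \<Rightarrow> (real^'n \<Rightarrow> real) \<Rightarrow> real^'n \<Rightarrow> real"
  where "coord_interp N M j f =
    (\<lambda>y. \<Sum>k\<in>{-int M..int M}. coord_tensor j f (of_int k / N) (tent N k) y)"

lemma C0_coord_interp: "N > 0 \<Longrightarrow> f \<in> C0 \<Longrightarrow> coord_interp N M j f \<in> C0"
  unfolding coord_interp_def by (intro C0_sum C0_coord_tensor C0_tent)

lemma coord_interp_approx:
  fixes f :: "real^'n \<Rightarrow> real"
  assumes f: "f \<in> C0" and e: "e > 0"
  obtains N M where "N > 0" "\<And>y. \<bar>f y - coord_interp N M j f y\<bar> \<le> e"
proof -
  obtain d where d: "d > 0" "\<And>x x'. dist x' x < d \<Longrightarrow> \<bar>f x' - f x\<bar> < e / 2"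
    using C0_uniformly_continuous[OF f] e unfolding uniformly_continuous_on_def dist_real_def
    by (metis UNIV_I half_gt_zero)
  obtain R where R: "\<And>x. R \<le> norm x \<Longrightarrow> \<bar>f x\<bar> \<le> e / 2"
    using C0_vanishes[OF f] e by (metis half_gt_zero)
  define N where "N = 2 / d"
  define M where "M = nat \<lceil>N * \<bar>R\<bar>\<rceil> + 1"
  have N: "N > 0" using d by (simp add: N_def)
  have M: "N * \<bar>R\<bar> \<le> real M - 1"
    unfolding M_def by (metis add_diff_cancel_right' of_nat_1 of_nat_add real_nat_ceiling_ge)
  have "\<bar>f y - coord_interp N M j f y\<bar> \<le> e" for y
  proof -
    define A where "A = {-int M..int M}"
    define S where "S = (\<Sum>k\<in>A. tent N k (y $ j))"
    define fk where "fk k = f (coord_upd y j (of_int k / N))" for k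
    have S: "0 \<le> S" "S \<le> 1"
      unfolding S_def A_def by (simp_all add: sum_nonneg tent_nonneg sum_tent_le_1)
    have split: "f y - coord_interp N M j f y = f y * (1 - S) + (\<Sum>k\<in>A. (f y - fk k) * tent N k (y $ j))"
      by (simp add: coord_interp_def coord_tensor_def A_def S_def fk_def algebra_simps
          sum_subtractf sum_distrib_left)
    have "\<bar>f y * (1 - S)\<bar> \<le> e / 2"
    proof (cases "\<bar>N * (y $ j)\<bar> \<le> real M - 1")
      case True
      then have "S = 1" unfolding S_def A_def by (rule sum_tent_eq_1)
      then show ?thesis using e by simp
    next
      case False
      moreover have "\<bar>N * (y $ j)\<bar> = N * \<bar>y $ j\<bar>" using N by (simp add: abs_mult)
      ultimately have "N * \<bar>R\<bar> \<le> N * \<bar>y $ j\<bar>" using M by linarith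
      with N have "\<bar>R\<bar> \<le> \<bar>y $ j\<bar>" by simp
      then have "\<bar>f y\<bar> \<le> e / 2" using R component_le_norm_cart[of y j] by force
      moreover have "\<bar>f y * (1 - S)\<bar> \<le> \<bar>f y\<bar> * 1"
        unfolding abs_mult using S by (intro mult_left_mono) auto
      ultimately show ?thesis by simp
    qed
    moreover have "\<bar>(f y - fk k) * tent N k (y $ j)\<bar> \<le> e / 2 * tent N k (y $ j)" for k
    proof (cases "\<bar>N * (y $ j) - of_int k\<bar> < 1")
      case True
      then have "\<bar>of_int k / N - y $ j\<bar> < d"
        using N by (simp add: N_def field_simps abs_minus_commute)
      then have "\<bar>f y - fk k\<bar> \<le> e / 2"
        using d(2)[of "coord_upd y j (of_int k / N)" y] dist_coord_upd[of y j _ "y $ j"]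
        by (simp add: fk_def abs_minus_commute)
      then have "\<bar>f y - fk k\<bar> * tent N k (y $ j) \<le> e / 2 * tent N k (y $ j)"
        using tent_nonneg by (rule mult_right_mono)
      then show ?thesis by (simp add: abs_mult tent_nonneg)
    qed (simp add: tent_eq_0)
    then have "\<bar>\<Sum>k\<in>A. (f y - fk k) * tent N k (y $ j)\<bar> \<le> e / 2 * S"
      unfolding S_def sum_distrib_left by (intro order_trans[OF sum_abs] sum_mono)
    moreover have "e / 2 * S \<le> e / 2" using S e by (simp add: mult_left_le)
    ultimately have "\<bar>f y * (1 - S)\<bar> + \<bar>\<Sum>k\<in>A. (f y - fk k) * tent N k (y $ j)\<bar> \<le> e"
      by linarith
    then show ?thesis unfolding split by (rule order_trans[OF abs_triangle_ineq])
  qed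
  with N show thesis by (rule that)
qed

section \<open>Lifting an operator to one coordinate\<close>

lemma coord_lift_op_lincomb:
  "coord_lift j (op_lincomb a S b T) = op_lincomb a (coord_lift j S) b (coord_lift j T)"
  by (simp add: coord_lift_def op_lincomb_def)

lemma coord_lift_compose: "coord_lift j (S \<circ> T) f = coord_lift j S (coord_lift j T f)"
  by (simp add: coord_lift_def)

lemma coord_lift_lincomb:
  fixes f g :: "real^'n \<Rightarrow> real"
  assumes T: "bounded_op T" and f: "f \<in> C0" and g: "g \<in> C0"
  shows "coord_lift j T (\<lambda>x. a * f x + b * g x) = (\<lambda>x. a * coord_lift j T f x + b * coord_lift j T g x)"
  unfolding coord_lift_def by (simp add: bounded_op_lincomb[OF T C0_slice[OF f] C0_slice[OF g]])

lemma coord_lift_diff: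
  fixes f g :: "real^'n \<Rightarrow> real"
  assumes "bounded_op T" "f \<in> C0" "g \<in> C0"
  shows "coord_lift j T (\<lambda>x. f x - g x) = (\<lambda>x. coord_lift j T f x - coord_lift j T g x)"
  using coord_lift_lincomb[OF assms, where a = 1 and b = "-1"] by simp

lemma coord_lift_sum:
  fixes g :: "'k \<Rightarrow> real^'n \<Rightarrow> real"
  assumes T: "bounded_op T" and A: "finite A" and g: "\<And>k. k \<in> A \<Longrightarrow> g k \<in> C0"
  shows "coord_lift j T (\<lambda>x. \<Sum>k\<in>A. g k x) = (\<lambda>x. \<Sum>k\<in>A. coord_lift j T (g k) x)"
  unfolding coord_lift_def
  by (subst bounded_op_sum[OF T A]) (auto intro: C0_slice g)

lemma coord_lift_bound:
  assumes T: "bounded_op T"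
  obtains K where "K \<ge> 0" "\<And>(f :: real^'n \<Rightarrow> real) x. f \<in> C0 \<Longrightarrow> \<bar>coord_lift j T f x\<bar> \<le> K * supn f"
proof -
  obtain K where K: "K \<ge> 0" "\<And>g t. g \<in> C0 \<Longrightarrow> \<bar>T g t\<bar> \<le> K * supn g"
    using bounded_op_bound[OF T] by blast
  have "\<bar>coord_lift j T f x\<bar> \<le> K * supn f" if f: "f \<in> C0" for f :: "real^'n \<Rightarrow> real" and x
  proof -
    have "\<bar>coord_lift j T f x\<bar> \<le> K * supn (\<lambda>t. f (coord_upd x j t))"
      unfolding coord_lift_def by (rule K(2)[OF C0_slice[OF f]])
    also have "\<dots> \<le> K * supn f" using supn_slice_le[OF f] K(1) by (rule mult_left_mono)
    finally show ?thesis .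
  qed
  with K(1) show thesis by (rule that)
qed

lemma coord_lift_coord_tensor:
  assumes "bounded_op T" "h \<in> C0"
  shows "coord_lift j T (coord_tensor j g c h) = coord_tensor j g c (T h)"
  by (simp add: coord_lift_def coord_tensor_def bounded_op_mult[OF assms] fun_eq_iff)

lemma coord_lift_coord_tensor_other:
  fixes g :: "real^'n \<Rightarrow> real"
  assumes ij: "i \<noteq> j" and T: "bounded_op T" and g: "g \<in> C0"
  shows "coord_lift j T (coord_tensor i g c h) = coord_tensor i (coord_lift j T g) c h"
proof
  fix x
  have "coord_lift j T (coord_tensor i g c h) x
      = T (\<lambda>t. h (x $ i) * g (coord_upd (coord_upd x i c) j t)) (x $ j)"
    using ij by (simp add: coord_lift_def coord_tensor_def coord_upd_swap mult.commute)
  also have "\<dots> = coord_tensor i (coord_lift j T g) c h x"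
    using ij by (simp add: bounded_op_mult[OF T C0_slice[OF g]] coord_lift_def coord_tensor_def)
  finally show "coord_lift j T (coord_tensor i g c h) x = coord_tensor i (coord_lift j T g) c h x" .
qed

lemma C0_coord_lift:
  fixes f :: "real^'n \<Rightarrow> real"
  assumes T: "bounded_op T" and f: "f \<in> C0"
  shows "coord_lift j T f \<in> C0"
proof (rule C0_uniform_approx)
  fix e :: real assume e: "e > 0"
  obtain K where K: "K \<ge> 0" "\<And>(f :: real^'n \<Rightarrow> real) x. f \<in> C0 \<Longrightarrow> \<bar>coord_lift j T f x\<bar> \<le> K * supn f"
    using coord_lift_bound[OF T] by blast
  obtain N M where N: "N > 0" and approx: "\<And>y. \<bar>f y - coord_interp N M j f y\<bar> \<le> e / (K + 1)"
    using coord_interp_approx[OF f, of "e / (K + 1)"] e K(1) by (metis add_nonneg_pos divide_pos_pos zero_less_one)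
  define fN where "fN = coord_interp N M j f"
  have fN: "fN \<in> C0" unfolding fN_def using N f by (rule C0_coord_interp)
  have "coord_lift j T fN = (\<lambda>x. \<Sum>k\<in>{-int M..int M}. coord_tensor j f (of_int k / N) (T (tent N k)) x)"
    unfolding fN_def coord_interp_def
    by (simp add: coord_lift_sum[OF T] C0_coord_tensor C0_tent N f coord_lift_coord_tensor[OF T])
  then have lift_fN: "coord_lift j T fN \<in> C0"
    by (simp add: C0_sum C0_coord_tensor f bounded_op_C0[OF T] C0_tent N)
  have "\<bar>coord_lift j T f x - coord_lift j T fN x\<bar> \<le> e" for x
  proof -
    have "\<bar>coord_lift j T f x - coord_lift j T fN x\<bar> = \<bar>coord_lift j T (\<lambda>y. f y - fN y) x\<bar>"
      by (simp add: coord_lift_diff[OF T f fN])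
    also have "\<dots> \<le> K * supn (\<lambda>y. f y - fN y)" using K(2) C0_diff[OF f fN] .
    also have "\<dots> \<le> K * (e / (K + 1))"
      using supn_least[of "\<lambda>y. f y - fN y", OF approx[unfolded fN_def[symmetric]]] K(1)
      by (rule mult_left_mono)
    also have "\<dots> \<le> e" using K(1) e by (simp add: field_simps)
    finally show ?thesis .
  qed
  with lift_fN show "\<exists>g\<in>C0. \<forall>x. \<bar>coord_lift j T f x - g x\<bar> \<le> e" by blast
qed

lemma bounded_op_coord_lift:
  assumes T: "bounded_op T"
  shows "bounded_op (coord_lift j T :: (real^'n \<Rightarrow> real) \<Rightarrow> _)"
proof -
  obtain K where "\<And>(f :: real^'n \<Rightarrow> real) x. f \<in> C0 \<Longrightarrow> \<bar>coord_lift j T f x\<bar> \<le> K * supn f"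
    using coord_lift_bound[OF T] by blast
  then show ?thesis
    by (intro bounded_opI) (auto simp: C0_coord_lift[OF T] coord_lift_lincomb[OF T])
qed

lemma coord_lift_commute:
  fixes f :: "real^'n \<Rightarrow> real"
  assumes ij: "i \<noteq> j" and S: "bounded_op S" and T: "bounded_op T" and f: "f \<in> C0"
  shows "coord_lift i S (coord_lift j T f) = coord_lift j T (coord_lift i S f)"
proof -
  let ?U = "\<lambda>f. coord_lift i S (coord_lift j T f :: real^'n \<Rightarrow> real)"
  let ?V = "\<lambda>f. coord_lift j T (coord_lift i S f :: real^'n \<Rightarrow> real)"
  have U: "bounded_op ?U" and V: "bounded_op ?V"
    by (simp_all add: bounded_op_compose bounded_op_coord_lift S T)
  have tensor: "?U (coord_tensor i f c h) = ?V (coord_tensor i f c h)" if h: "h \<in> C0" for c h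
    by (simp add: coord_lift_coord_tensor_other[OF ij T f] coord_lift_coord_tensor[OF S h]
        coord_lift_coord_tensor_other[OF ij T f] bounded_op_C0[OF S h])
  have "?U f = ?V f"
  proof (rule bounded_op_eq_by_approx[OF U V f])
    fix e :: real assume "e > 0"
    then obtain N M where N: "N > 0" and approx: "\<And>y. \<bar>f y - coord_interp N M i f y\<bar> \<le> e"
      using coord_interp_approx[OF f] by metis
    have "?U (coord_interp N M i f) = ?V (coord_interp N M i f)"
      unfolding coord_interp_def
      by (simp add: bounded_op_sum[OF U] bounded_op_sum[OF V] C0_coord_tensor C0_tent N f tensor)
    with approx C0_coord_interp[OF N f]
    show "\<exists>g\<in>C0. (\<forall>x. \<bar>f x - g x\<bar> \<le> e) \<and> ?U g = ?V g" by blast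
  qed
  then show ?thesis by simp
qed

lemma opnorm_coord_lift_le:
  assumes D: "bounded_op D"
  shows "opnorm (coord_lift j D :: (real^'n \<Rightarrow> real) \<Rightarrow> _) \<le> opnorm D"
proof -
  obtain K where K: "K \<ge> 0" "\<And>g t. g \<in> C0 \<Longrightarrow> \<bar>D g t\<bar> \<le> K * supn g"
    using bounded_op_bound[OF D] by blast
  have "supn (D g) \<le> K" if "g \<in> {g \<in> C0. supn g \<le> 1}" for g
    using that K by (intro supn_least) (metis (mono_tags, lifting) mem_Collect_eq mult_left_le order_trans)
  then have bdd: "bdd_above ((\<lambda>g. supn (D g)) ` {g \<in> C0. supn g \<le> 1})"
    by (rule bdd_aboveI2)
  have "(\<lambda>x::real^'n. 0) \<in> {f \<in> C0. supn f \<le> 1}"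
    by (simp add: C0_zero supn_least)
  then have nonempty: "{f \<in> (C0 :: (real^'n \<Rightarrow> real) set). supn f \<le> 1} \<noteq> {}" by blast
  have "supn (coord_lift j D f) \<le> opnorm D" if f: "f \<in> C0" "supn f \<le> 1" for f :: "real^'n \<Rightarrow> real"
  proof (rule supn_least)
    fix x
    define g where "g = (\<lambda>t. f (coord_upd x j t))"
    have g: "g \<in> {g \<in> C0. supn g \<le> 1}"
      using C0_slice[OF f(1)] order_trans[OF supn_slice_le[OF f(1)] f(2)] by (simp add: g_def)
    have "\<bar>coord_lift j D f x\<bar> = \<bar>D g (x $ j)\<bar>" by (simp add: coord_lift_def g_def)
    also have "\<dots> \<le> supn (D g)" using g by (intro abs_le_supn bounded_op_C0[OF D]) auto
    also have "\<dots> \<le> opnorm D" unfolding opnorm_def using bdd g by (rule cSUP_upper2) simp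
    finally show "\<bar>coord_lift j D f x\<bar> \<le> opnorm D" .
  qed
  with nonempty show ?thesis unfolding opnorm_def[of "coord_lift j D"] by (intro cSUP_least) auto
qed

theorem lemma1p3p2:
  fixes dummy :: "'n::finite itself"
  shows
   "(\<forall>(j::'n) (T::(real \<Rightarrow> real) \<Rightarrow> (real \<Rightarrow> real)). bounded_op T \<longrightarrow>
       (\<exists>U::(real^'n \<Rightarrow> real) \<Rightarrow> (real^'n \<Rightarrow> real). bounded_op U \<and>
          (\<forall>f\<in>C0. \<forall>x. U f x = T (\<lambda>t. f (coord_upd x j t)) (x $ j))) \<and>
       (\<forall>U U'::(real^'n \<Rightarrow> real) \<Rightarrow> (real^'n \<Rightarrow> real).
          bounded_op U \<and> (\<forall>f\<in>C0. \<forall>x. U f x = T (\<lambda>t. f (coord_upd x j t)) (x $ j)) \<and>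
          bounded_op U' \<and> (\<forall>f\<in>C0. \<forall>x. U' f x = T (\<lambda>t. f (coord_upd x j t)) (x $ j))
          \<longrightarrow> (\<forall>f\<in>C0. U f = U' f)))
    \<and>
    (\<forall>j::'n.
       (\<forall>T. bounded_op T \<longrightarrow> bounded_op (coord_lift j T)) \<and>
       (\<forall>S T a b. bounded_op S \<and> bounded_op T \<longrightarrow>
          (\<forall>f\<in>C0. coord_lift j (op_lincomb a S b T) f
                    = op_lincomb a (coord_lift j S) b (coord_lift j T) f)) \<and>
       (\<forall>S T. bounded_op S \<and> bounded_op T \<longrightarrow>
          (\<forall>f\<in>C0. coord_lift j (S \<circ> T) f = coord_lift j S (coord_lift j T f))) \<and>
       (\<forall>T. bounded_op T \<longrightarrow> (\<forall>e>0. \<exists>\<delta>>0. \<forall>S. bounded_op S \<and>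
            opnorm (op_lincomb 1 S (-1) T) < \<delta> \<longrightarrow>
            opnorm (op_lincomb 1 (coord_lift j S) (-1) (coord_lift j T)) < e)))
    \<and>
    (\<forall>(i::'n) (j::'n) S T. i \<noteq> j \<and> bounded_op S \<and> bounded_op T \<longrightarrow>
       (\<forall>f\<in>(C0 :: (real^'n \<Rightarrow> real) set).
          coord_lift i S (coord_lift j T f) = coord_lift j T (coord_lift i S f)))"
proof (intro conjI allI impI ballI)
  fix j :: 'n and T :: "(real \<Rightarrow> real) \<Rightarrow> real \<Rightarrow> real" assume T: "bounded_op T"
  show "\<exists>U::(real^'n \<Rightarrow> real) \<Rightarrow> _. bounded_op U \<and>
          (\<forall>f\<in>C0. \<forall>x. U f x = T (\<lambda>t. f (coord_upd x j t)) (x $ j))"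
    using bounded_op_coord_lift[OF T] by (auto simp: coord_lift_def)
  show "bounded_op (coord_lift j T :: (real^'n \<Rightarrow> real) \<Rightarrow> _)"
    using T by (rule bounded_op_coord_lift)
  fix e :: real assume "e > 0"
  have "opnorm (op_lincomb 1 (coord_lift j S) (-1) (coord_lift j T) :: (real^'n \<Rightarrow> real) \<Rightarrow> _)
          \<le> opnorm (op_lincomb 1 S (-1) T)" if "bounded_op S" for S
    unfolding coord_lift_op_lincomb[symmetric]
    using T that by (intro opnorm_coord_lift_le bounded_op_op_lincomb)
  with \<open>e > 0\<close> show "\<exists>\<delta>>0. \<forall>S. bounded_op S \<and> opnorm (op_lincomb 1 S (-1) T) < \<delta> \<longrightarrow>
      opnorm (op_lincomb 1 (coord_lift j S) (-1) (coord_lift j T) :: (real^'n \<Rightarrow> real) \<Rightarrow> _) < e"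
    by force
qed (auto simp: coord_lift_op_lincomb coord_lift_compose coord_lift_commute)

end
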